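(* Let $(F,G)$ be an $(N,n)$ dual pair for $\mathcal H$. Then: (i) if $(F,G)\in\mathcal F^{(1)}$ then $(F,G)\in\mathcal R^{(1)}$; (ii) $(F,G)\in\mathcal F^{(1)}$ if and only if $(F,G)\in\mathcal N^{(1)}$; (iii) if $(F,G)\in\mathcal N^{(1)}$ then $(F,G)\in\mathcal R^{(1)}$.
   Context: $\mathcal H$ is a complex Hilbert space of finite dimension $n$, inner product linear in the first argument, $N\ge n$. A finite sequence $F=\{f_i\}_{i=1}^N$ is a frame if there are $0<A\le B$ with $A\|f\|^2\le\sum_i|\langle f,f_i\rangle|^2\le B\|f\|^2$ for all $f$. $G=\{g_i\}_{i=1}^N$ is a dual of $F$ if $f=\sum_i\langle f,g_i\rangle f_i$ for all $f$; $(F,G)$ is then an $(N,n)$ dual pair. $E_{\Lambda,F,G}f=\sum_{i\in\Lambda}\langle f,f_i\rangle g_i$. For a measure $\mathcal M$ on operators, let $\mathcal M^{(1)}_{F,G}=\max_{1\le i\le N}\mathcal M(E_{\{i\},F,G})$ and call $(F,G)$ optimal for $\mathcal M$ if $\mathcal M^{(1)}_{F,G}$ equals the infimum of $\mathcal M^{(1)}_{F',G'}$ over all $(N,n)$ dual pairs $(F',G')$ for $\mathcal H$. $\mathcal F^{(1)}$, $\mathcal R^{(1)}$, $\mathcal N^{(1)}$ denote the sets of optimal pairs for, respectively, the Frobenius norm $\|T\|_{\mathcal F}=\sqrt{\operatorname{tr}(T^*T)}$, the spectral radius $\rho(T)$, and the numerical radius $\omega(T)=\sup\{|\langle Tf,f\rangle|:\|f\|=1\}$.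 *)

theory Defs
  imports "HOL-Analysis.Analysis"
begin

text \<open>The n-dimensional complex Hilbert space is modelled as complex^'n
  (dimension n = CARD('n)), with the standard inner product, linear in the
  first argument. Operators are n x n complex matrices acting on columns.\<close>

definition cinner :: "complex^'n \<Rightarrow> complex^'n \<Rightarrow> complex" where
  "cinner x y = (\<Sum>j\<in>UNIV. x $ j * cnj (y $ j))"

definition hnorm :: "complex^'n \<Rightarrow> real" where
  "hnorm x = sqrt (Re (cinner x x))"

definition is_frame :: "('m::finite \<Rightarrow> complex^'n) \<Rightarrow> bool" where
  "is_frame F \<longleftrightarrow> (\<exists>A B. 0 < A \<and> A \<le> B \<and>
     (\<forall>f. A * (hnorm f)^2 \<le> (\<Sum>i\<in>UNIV. (cmod (cinner f (F i)))^2)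
        \<and> (\<Sum>i\<in>UNIV. (cmod (cinner f (F i)))^2) \<le> B * (hnorm f)^2))"

definition is_dual :: "('m::finite \<Rightarrow> complex^'n) \<Rightarrow> ('m \<Rightarrow> complex^'n) \<Rightarrow> bool" where
  "is_dual F G \<longleftrightarrow> (\<forall>f. f = (\<Sum>i\<in>UNIV. cinner f (G i) *s F i))"

definition dual_pair :: "('m::finite \<Rightarrow> complex^'n) \<Rightarrow> ('m \<Rightarrow> complex^'n) \<Rightarrow> bool" where
  "dual_pair F G \<longleftrightarrow> is_frame F \<and> is_dual F G"

definition E_op :: "'m set \<Rightarrow> ('m \<Rightarrow> complex^'n) \<Rightarrow> ('m \<Rightarrow> complex^'n) \<Rightarrow> complex^'n \<Rightarrow> complex^'n" where
  "E_op L F G f = (\<Sum>i\<in>L. cinner f (F i) *s G i)"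

definition E_mat :: "'m set \<Rightarrow> ('m \<Rightarrow> complex^'n) \<Rightarrow> ('m \<Rightarrow> complex^'n) \<Rightarrow> complex^'n^'n" where
  "E_mat L F G = (\<chi> j k. E_op L F G (axis k 1) $ j)"

definition cadj :: "complex^'n^'n \<Rightarrow> complex^'n^'n" where
  "cadj T = (\<chi> i j. cnj (T $ j $ i))"

definition ctrace :: "complex^'n^'n \<Rightarrow> complex" where
  "ctrace T = (\<Sum>i\<in>UNIV. T $ i $ i)"

definition frob_norm :: "complex^'n^'n \<Rightarrow> real" where
  "frob_norm T = sqrt (Re (ctrace (cadj T ** T)))"

definition cspectrum :: "complex^'n^'n \<Rightarrow> complex set" where
  "cspectrum T = {c. \<exists>v. v \<noteq> 0 \<and> T *v v = c *s v}"

definition spec_radius :: "complex^'n^'n \<Rightarrow> real" where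
  "spec_radius T = Sup (cmod ` cspectrum T)"

definition num_radius :: "complex^'n^'n \<Rightarrow> real" where
  "num_radius T = Sup {cmod (cinner (T *v f) f) | f. hnorm f = 1}"

definition M1 :: "(complex^'n^'n \<Rightarrow> real) \<Rightarrow> ('m::finite \<Rightarrow> complex^'n) \<Rightarrow> ('m \<Rightarrow> complex^'n) \<Rightarrow> real" where
  "M1 M F G = Max ((\<lambda>i. M (E_mat {i} F G)) ` UNIV)"

definition optimal :: "(complex^'n^'n \<Rightarrow> real) \<Rightarrow> ('m::finite \<Rightarrow> complex^'n) \<Rightarrow> ('m \<Rightarrow> complex^'n) \<Rightarrow> bool" where
  "optimal M F G \<longleftrightarrow> dual_pair F G \<and>
     M1 M F G = Inf {M1 M F' G' | (F' :: 'm \<Rightarrow> complex^'n) G'. dual_pair F' G'}"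

end

theory Submission
  imports Defs
begin

text \<open>E_{i} is the rank-one operator x \<mapsto> \<langle>x,f_i\<rangle> g_i. Its spectral radius is
  |\<langle>g_i,f_i\<rangle>|, its Frobenius norm is \<parallel>g_i\<parallel>\<parallel>f_i\<parallel>, and its numerical radius lies between
  the two (and is at least their mean when \<langle>g_i,f_i\<rangle> > 0). Since
  \<Sum>_i \<langle>g_i,f_i\<rangle> = tr I = n, each of the three maxima over i is at least n/N, and an
  equal-norm Parseval frame attains n/N for all three; so optimality for each measure means
  that its maximum equals n/N. Frobenius optimality then bounds the two smaller measures by
  n/N. Numerical-radius optimality gives |\<langle>g_i,f_i\<rangle>| \<le> n/N for all i with sum n, hence
  \<langle>g_i,f_i\<rangle> = n/N, and the mean bound yields \<parallel>g_i\<parallel>\<parallel>f_i\<parallel> \<le> n/N.\<close>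

lemma cinner_add_left: "cinner (x + y) z = cinner x z + cinner y z"
  by (simp add: cinner_def distrib_right sum.distrib)

lemma cinner_add_right: "cinner z (x + y) = cinner z x + cinner z y"
  by (simp add: cinner_def distrib_left sum.distrib)

lemma cinner_scale_left: "cinner (c *s x) y = c * cinner x y"
  by (simp add: cinner_def sum_distrib_left mult.assoc)

lemma cinner_scale_right: "cinner x (c *s y) = cnj c * cinner x y"
  by (simp add: cinner_def sum_distrib_left algebra_simps)

lemma cinner_commute: "cinner y x = cnj (cinner x y)"
  by (simp add: cinner_def mult.commute)

lemma cinner_zero_left [simp]: "cinner 0 x = 0"
  by (simp add: cinner_def)

lemma cinner_zero_right [simp]: "cinner x 0 = 0"
  by (simp add: cinner_def)

lemma cinner_axis_left: "cinner (axis k 1) f = cnj (f $ k)"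
proof -
  have "cinner (axis k 1) f = (\<Sum>j\<in>UNIV. if j = k then cnj (f $ k) else 0)"
    unfolding cinner_def axis_def by (intro sum.cong) auto
  thus ?thesis by simp
qed

lemma cinner_self_eq_sum: "cinner x x = of_real (\<Sum>j\<in>UNIV. (cmod (x $ j))^2)"
  by (simp add: cinner_def complex_norm_square[symmetric])

text \<open>The modulus vector of x has Euclidean norm hnorm x; this transfers Cauchy--Schwarz
  and definiteness from real^'n.\<close>
lemma hnorm_eq_norm_modulus: "hnorm x = norm (\<chi> j. cmod (x $ j))"
  by (simp add: hnorm_def cinner_self_eq_sum norm_vec_def L2_set_def)

lemma cinner_self_eq_hnorm_sq: "cinner x x = of_real ((hnorm x)^2)"
  by (simp add: hnorm_def cinner_self_eq_sum sum_nonneg)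

lemma cmod_cinner_self: "cmod (cinner x x) = (hnorm x)^2"
  by (simp only: cinner_self_eq_hnorm_sq norm_of_real) simp

lemma hnorm_nonneg: "0 \<le> hnorm x"
  by (simp add: hnorm_eq_norm_modulus)

lemma hnorm_eq_0_iff: "hnorm x = 0 \<longleftrightarrow> x = 0"
  by (simp add: hnorm_eq_norm_modulus vec_eq_iff)

lemma hnorm_pos_iff: "0 < hnorm x \<longleftrightarrow> x \<noteq> 0"
  using hnorm_nonneg[of x] hnorm_eq_0_iff[of x] by linarith

lemma hnorm_axis: "hnorm (axis k (1::complex)) = 1"
  by (simp add: hnorm_def cinner_axis_left)

lemma hnorm_scale: "hnorm (c *s x) = cmod c * hnorm x"
proof -
  have "of_real ((hnorm (c *s x))^2) = cinner (c *s x) (c *s x)"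
    by (simp add: cinner_self_eq_hnorm_sq)
  also have "\<dots> = cnj c * c * cinner x x"
    by (simp add: cinner_scale_left cinner_scale_right)
  also have "\<dots> = of_real ((cmod c * hnorm x)^2)"
    by (simp add: cinner_self_eq_hnorm_sq power_mult_distrib complex_norm_square mult.commute flip: of_real_power)
  finally have "(hnorm (c *s x))^2 = (cmod c * hnorm x)^2"
    using of_real_eq_iff by blast
  thus ?thesis
    by (simp add: hnorm_nonneg power2_eq_iff_nonneg)
qed

lemma cauchy_schwarz_cinner: "cmod (cinner x y) \<le> hnorm x * hnorm y"
proof -
  have "cmod (cinner x y) \<le> (\<Sum>j\<in>UNIV. cmod (x $ j * cnj (y $ j)))"
    unfolding cinner_def by (rule norm_sum)
  also have "\<dots> = inner (\<chi> j. cmod (x $ j)) (\<chi> j. cmod (y $ j))"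
    by (simp add: inner_vec_def norm_mult)
  also have "\<dots> \<le> hnorm x * hnorm y"
    unfolding hnorm_eq_norm_modulus by (rule norm_cauchy_schwarz)
  finally show ?thesis .
qed

definition rank_one :: "complex^'n \<Rightarrow> complex^'n \<Rightarrow> complex^'n^'n" where
  "rank_one g f = (\<chi> j k. g $ j * cnj (f $ k))"

lemma E_mat_singleton: "E_mat {i} F G = rank_one (G i) (F i)"
  by (simp add: E_mat_def E_op_def rank_one_def cinner_axis_left vec_eq_iff mult.commute)

lemma rank_one_mulv: "rank_one g f *v x = cinner x f *s g"
  by (simp add: matrix_vector_mult_def rank_one_def vec_eq_iff cinner_def
      sum_distrib_left algebra_simps)

lemma frob_norm_rank_one: "frob_norm (rank_one g f) = hnorm g * hnorm f"
proof -
  have "ctrace (cadj (rank_one g f) ** rank_one g f) = cinner g g * cinner f f"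
    by (simp add: ctrace_def cadj_def matrix_matrix_mult_def rank_one_def cinner_def
        sum_distrib_left sum_distrib_right algebra_simps)
       (rule sum.swap)
  also have "\<dots> = of_real ((hnorm g * hnorm f)^2)"
    by (simp add: cinner_self_eq_hnorm_sq power_mult_distrib)
  finally show ?thesis
    by (simp add: frob_norm_def hnorm_nonneg)
qed

lemma cspectrum_rank_one_subset: "cspectrum (rank_one g f) \<subseteq> {0, cinner g f}"
proof
  fix c assume "c \<in> cspectrum (rank_one g f)"
  then obtain v where v: "v \<noteq> 0" "cinner v f *s g = c *s v"
    by (auto simp: cspectrum_def rank_one_mulv)
  show "c \<in> {0, cinner g f}"
  proof (cases "c = 0")
    case False
    have "cinner v f \<noteq> 0"
      using v False by (auto simp: vec_eq_iff)
    moreover have "cinner v f * cinner g f = c * cinner v f"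
      using arg_cong[OF v(2), of "\<lambda>x. cinner x f"] by (simp add: cinner_scale_left)
    ultimately show ?thesis by simp
  qed simp
qed

lemma cinner_in_cspectrum_rank_one: "cinner g f \<in> cspectrum (rank_one g f)"
proof (cases "g = 0")
  case True
  have "axis undefined (1::complex) \<noteq> 0" by (simp add: axis_eq_0_iff)
  with True show ?thesis
    by (auto simp: cspectrum_def rank_one_mulv)
next
  case False
  thus ?thesis by (auto simp: cspectrum_def rank_one_mulv)
qed

lemma spec_radius_rank_one: "spec_radius (rank_one g f) = cmod (cinner g f)"
proof -
  have "cmod ` cspectrum (rank_one g f) \<subseteq> {0, cmod (cinner g f)}"
    using cspectrum_rank_one_subset[of g f] by auto
  hence "Sup (cmod ` cspectrum (rank_one g f)) = cmod (cinner g f)"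
    using cinner_in_cspectrum_rank_one[of g f] by (intro cSup_eq_maximum) auto
  thus ?thesis by (simp add: spec_radius_def)
qed

lemma cinner_rank_one_mulv: "cinner (rank_one g f *v x) x = cinner x f * cinner g x"
  by (simp add: rank_one_mulv cinner_scale_left)

lemma cmod_numerical_range_rank_one_le:
  assumes "hnorm x = 1"
  shows "cmod (cinner (rank_one g f *v x) x) \<le> hnorm g * hnorm f"
proof -
  have "cmod (cinner (rank_one g f *v x) x) = cmod (cinner x f) * cmod (cinner g x)"
    by (simp add: cinner_rank_one_mulv norm_mult)
  also have "\<dots> \<le> (hnorm x * hnorm f) * (hnorm g * hnorm x)"
    by (intro mult_mono cauchy_schwarz_cinner) (auto simp: hnorm_nonneg)
  finally show ?thesis
    using assms by (simp add: mult.commute)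
qed

lemma num_radius_rank_one_le: "num_radius (rank_one g f) \<le> hnorm g * hnorm f"
  unfolding num_radius_def
  using hnorm_axis cmod_numerical_range_rank_one_le by (intro cSup_least) blast+

lemma cmod_numerical_range_le_num_radius_rank_one:
  assumes "hnorm x = 1"
  shows "cmod (cinner x f * cinner g x) \<le> num_radius (rank_one g f)"
  unfolding num_radius_def cinner_rank_one_mulv[symmetric]
  using assms cmod_numerical_range_rank_one_le
  by (intro cSup_upper bdd_aboveI[where M = "hnorm g * hnorm f"]) blast+

lemma cmod_quadratic_form_le_num_radius_rank_one:
  "cmod (cinner x f * cinner g x) \<le> num_radius (rank_one g f) * (hnorm x)^2"
proof (cases "x = 0")
  case False
  hence h: "0 < hnorm x" by (simp add: hnorm_pos_iff)
  have "cmod (cinner x f * cinner g x) / (hnorm x)^2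
      = cmod (cinner (of_real (1 / hnorm x) *s x) f * cinner g (of_real (1 / hnorm x) *s x))"
    by (simp add: cinner_scale_left cinner_scale_right norm_mult norm_divide power2_eq_square
        hnorm_nonneg)
  also have "\<dots> \<le> num_radius (rank_one g f)"
    using h by (intro cmod_numerical_range_le_num_radius_rank_one) (simp add: hnorm_scale norm_divide)
  finally show ?thesis
    using h by (simp add: pos_divide_le_eq)
qed (simp add: hnorm_def)

lemma num_radius_nonneg: "0 \<le> num_radius (rank_one g f)"
  using cmod_numerical_range_le_num_radius_rank_one[OF hnorm_axis] norm_ge_zero order_trans
  by blast

lemma cmod_cinner_le_num_radius_rank_one: "cmod (cinner g f) \<le> num_radius (rank_one g f)"
proof (cases "g = 0")
  case False
  have "cmod (cinner g f) * (hnorm g)^2 = cmod (cinner g f * cinner g g)"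
    by (simp add: cinner_self_eq_hnorm_sq norm_mult norm_power)
  also have "\<dots> \<le> num_radius (rank_one g f) * (hnorm g)^2"
    by (rule cmod_quadratic_form_le_num_radius_rank_one)
  finally have "cmod (cinner g f) * (hnorm g)^2 \<le> num_radius (rank_one g f) * (hnorm g)^2" .
  moreover have "0 < (hnorm g)^2"
    using False by (simp add: hnorm_eq_0_iff)
  ultimately show ?thesis
    by (rule mult_right_le_imp_le)
qed (simp add: num_radius_nonneg)

text \<open>The witness is x = \<parallel>g\<parallel> f + \<parallel>f\<parallel> g; in fact
  (\<parallel>g\<parallel>\<parallel>f\<parallel> + |\<langle>g,f\<rangle>|)/2 is the exact numerical radius.\<close>
lemma num_radius_rank_one_ge_mean:
  assumes "cinner g f = of_real r" "0 < r"
  shows "(hnorm g * hnorm f + r) / 2 \<le> num_radius (rank_one g f)"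
proof -
  define P where "P = hnorm g * hnorm f"
  have "f \<noteq> 0" "g \<noteq> 0" using assms by auto
  hence P: "0 < P" by (simp add: P_def hnorm_pos_iff)
  define x where "x = of_real (hnorm g) *s f + of_real (hnorm f) *s g"
  have fg: "cinner f g = of_real r"
    using assms(1) cinner_commute[of f g] by simp
  have xf: "cinner x f = of_real (hnorm f * (P + r))"
    by (simp add: x_def P_def cinner_add_left cinner_scale_left cinner_self_eq_hnorm_sq assms(1)
        algebra_simps power2_eq_square)
  have gx: "cinner g x = of_real (hnorm g * (P + r))"
    by (simp add: x_def P_def cinner_add_right cinner_scale_right cinner_self_eq_hnorm_sq assms(1)
        algebra_simps power2_eq_square)
  have "cmod (cinner x f * cinner g x) = P * (P + r)^2"
    unfolding xf gx norm_mult norm_of_real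
    using P assms(2) by (simp add: P_def hnorm_nonneg power2_eq_square algebra_simps)
  moreover have "cinner x x = of_real (2 * P * (P + r))"
    unfolding x_def
    by (simp only: cinner_add_left cinner_add_right cinner_scale_left cinner_scale_right)
       (simp add: P_def cinner_self_eq_hnorm_sq assms(1) fg algebra_simps power2_eq_square)
  hence "(hnorm x)^2 = 2 * P * (P + r)"
    using cinner_self_eq_hnorm_sq[of x] of_real_eq_iff by metis
  ultimately have "P * (P + r)^2 \<le> num_radius (rank_one g f) * (2 * P * (P + r))"
    using cmod_quadratic_form_le_num_radius_rank_one[of x f g] by metis
  hence "(P + r) * (P * (P + r)) \<le> (2 * num_radius (rank_one g f)) * (P * (P + r))"
    by (simp add: power2_eq_square algebra_simps)
  thus ?thesis
    using P assms(2) by (simp add: P_def mult_le_cancel_right)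
qed

lemma trace_dual_pair:
  fixes F G :: "'m::finite \<Rightarrow> complex^'n"
  assumes "is_dual F G"
  shows "(\<Sum>i\<in>UNIV. cinner (G i) (F i)) = of_nat CARD('n)"
proof -
  have column: "(\<Sum>i\<in>UNIV. F i $ j * cnj (G i $ j)) = 1" for j
  proof -
    have "axis j 1 = (\<Sum>i\<in>UNIV. cinner (axis j 1) (G i) *s F i)"
      using assms unfolding is_dual_def by blast
    from arg_cong[OF this, of "\<lambda>x. x $ j"] show ?thesis
      by (simp add: cinner_axis_left sum_component mult.commute)
  qed
  have "(\<Sum>i\<in>UNIV. cinner (F i) (G i)) = (\<Sum>j\<in>UNIV. \<Sum>i\<in>UNIV. F i $ j * cnj (G i $ j))"
    unfolding cinner_def by (rule sum.swap)
  also have "\<dots> = of_nat CARD('n)"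
    by (simp add: column)
  finally have "cnj (\<Sum>i\<in>UNIV. cinner (F i) (G i)) = of_nat CARD('n)"
    by simp
  thus ?thesis
    by (simp add: cinner_commute[of "G _"])
qed

lemma ex_cmod_ge_of_sum_eq:
  fixes c :: "'m::finite \<Rightarrow> complex"
  assumes "(\<Sum>i\<in>UNIV. c i) = of_real (real CARD('m) * v)"
  shows "\<exists>i. v \<le> cmod (c i)"
proof (rule ccontr)
  assume "\<not> ?thesis"
  hence "Re (c j) < v" for j
    using abs_Re_le_cmod[of "c j"] by (meson abs_le_iff not_le order_trans)
  hence "(\<Sum>j\<in>UNIV. Re (c j)) < (\<Sum>j\<in>(UNIV::'m set). v)"
    by (intro sum_strict_mono) auto
  moreover have "(\<Sum>j\<in>UNIV. Re (c j)) = (\<Sum>j\<in>(UNIV::'m set). v)"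
    using arg_cong[OF assms, of Re] by (simp add: Re_sum)
  ultimately show False by simp
qed

lemma eq_of_cmod_le_of_sum_eq:
  fixes c :: "'m::finite \<Rightarrow> complex"
  assumes le: "\<And>i. cmod (c i) \<le> v" and sum: "(\<Sum>i\<in>UNIV. c i) = of_real (real CARD('m) * v)"
  shows "c i = of_real v"
proof -
  have Re_le: "Re (c j) \<le> v" for j
    using le[of j] abs_Re_le_cmod[of "c j"] by linarith
  have Re_eq: "Re (c i) = v"
  proof (rule ccontr)
    assume "Re (c i) \<noteq> v"
    hence "(\<Sum>j\<in>UNIV. Re (c j)) < (\<Sum>j\<in>(UNIV::'m set). v)"
      using Re_le by (intro sum_strict_mono_ex1) (auto simp: order.strict_iff_order)
    moreover have "(\<Sum>j\<in>UNIV. Re (c j)) = (\<Sum>j\<in>(UNIV::'m set). v)"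
      using arg_cong[OF sum, of Re] by (simp add: Re_sum)
    ultimately show False by simp
  qed
  have "(Re (c i))^2 + (Im (c i))^2 \<le> v^2"
    using le[of i] Re_eq by (metis cmod_power2 norm_ge_zero power_mono)
  hence "Im (c i) = 0"
    using Re_eq by simp
  thus ?thesis
    using Re_eq by (simp add: complex_eq_iff)
qed

lemma parseval_frame_dual_pair:
  fixes F :: "'m::finite \<Rightarrow> complex^'n"
  assumes orth: "\<And>j k. (\<Sum>i\<in>UNIV. cnj (F i $ j) * F i $ k) = (if j = k then 1 else 0)"
  shows "dual_pair F F"
proof -
  have "(\<Sum>i\<in>UNIV. cinner x (F i) *s F i) $ k = x $ k" for x :: "complex^'n" and k
  proof -
    have "(\<Sum>i\<in>UNIV. cinner x (F i) *s F i) $ k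
        = (\<Sum>i\<in>UNIV. \<Sum>j\<in>UNIV. x $ j * (cnj (F i $ j) * F i $ k))"
      by (simp add: sum_component cinner_def sum_distrib_left algebra_simps)
    also have "\<dots> = (\<Sum>j\<in>UNIV. x $ j * (\<Sum>i\<in>UNIV. cnj (F i $ j) * F i $ k))"
      by (subst sum.swap) (simp add: sum_distrib_left)
    also have "\<dots> = x $ k"
      by (simp add: orth if_distrib cong: if_cong)
    finally show ?thesis .
  qed
  hence dual: "is_dual F F"
    by (simp add: is_dual_def vec_eq_iff)
  have "of_real (\<Sum>i\<in>UNIV. (cmod (cinner x (F i)))^2) = (of_real ((hnorm x)^2) :: complex)" for x
  proof -
    have "of_real (\<Sum>i\<in>UNIV. (cmod (cinner x (F i)))^2)
        = (\<Sum>i\<in>UNIV. cinner x (F i) * cnj (cinner x (F i)))"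
      by (simp only: of_real_sum complex_norm_square)
    also have "\<dots> = (\<Sum>i\<in>UNIV. \<Sum>j\<in>UNIV. \<Sum>k\<in>UNIV. x $ j * cnj (x $ k) * (cnj (F i $ j) * F i $ k))"
      by (simp add: cinner_def sum_distrib_left sum_distrib_right algebra_simps)
         (rule sum.cong[OF refl], rule sum.swap)
    also have "\<dots> = (\<Sum>j\<in>UNIV. \<Sum>k\<in>UNIV. x $ j * cnj (x $ k) * (\<Sum>i\<in>UNIV. cnj (F i $ j) * F i $ k))"
      by (subst sum.swap, rule sum.cong[OF refl], subst sum.swap) (simp add: sum_distrib_left)
    also have "\<dots> = cinner x x"
      by (simp add: orth cinner_def if_distrib cong: if_cong)
    finally show ?thesis
      by (simp add: cinner_self_eq_hnorm_sq)
  qed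
  hence "is_frame F"
    unfolding is_frame_def of_real_eq_iff by (intro exI[of _ 1]) simp
  with dual show ?thesis
    by (simp add: dual_pair_def)
qed

lemma sum_powers_root_of_unity:
  fixes N :: nat and d :: int
  assumes "0 < N" "\<bar>d\<bar> < int N"
  shows "(\<Sum>m<N. exp (2 * pi * \<i> * of_int d / of_nat N) ^ m) = (if d = 0 then of_nat N else 0)"
proof (cases "d = 0")
  case False
  let ?z = "exp (2 * pi * \<i> * of_int d / of_nat N)"
  have "?z ^ N = exp (of_nat N * (2 * pi * \<i> * of_int d / of_nat N))"
    by (rule exp_of_nat_mult[symmetric])
  also have "\<dots> = exp (2 * pi * \<i> * of_int d)"
    using assms(1) by simp
  also have "\<dots> = 1"
    by (subst exp_eq_1) (auto intro!: exI[of _ d])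
  finally have zN: "?z ^ N = 1" .
  have "?z \<noteq> 1"
  proof
    assume "?z = 1"
    then obtain m :: int where "2 * pi * of_int d / real N = of_int (2 * m) * pi"
      by (auto simp: exp_eq_1)
    hence "real_of_int d = real_of_int m * real N"
      using assms(1) by (simp add: field_simps)
    hence "d = m * int N"
      by (metis of_int_eq_iff of_int_mult of_int_of_nat_eq)
    thus False
      using assms(2) False by (cases "m = 0") (auto simp: abs_mult mult_le_cancel_right1)
  qed
  with False zN show ?thesis
    by (simp add: geometric_sum)
qed simp

text \<open>The harmonic frame: n distinct columns of the N-point discrete Fourier matrix,
  scaled by 1/\<surd>N.\<close>
lemma ex_equal_norm_parseval_frame:
  assumes "CARD('n) \<le> CARD('m::finite)"
  shows "\<exists>F :: 'm \<Rightarrow> complex^'n. dual_pair F F \<and>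
           (\<forall>i. (hnorm (F i))^2 = real CARD('n) / real CARD('m))"
proof -
  define N where "N = CARD('m)"
  have N: "0 < N" by (simp add: N_def)
  obtain e :: "'m \<Rightarrow> nat" where e: "bij_betw e UNIV {..<N}"
    using ex_bij_betw_finite_nat[of "UNIV :: 'm set"] by (auto simp: N_def atLeast0LessThan)
  obtain c :: "'n \<Rightarrow> nat" where c: "bij_betw c UNIV {..<CARD('n)}"
    using ex_bij_betw_finite_nat[of "UNIV :: 'n set"] by (auto simp: atLeast0LessThan)
  have c_lt: "c j < N" for j
    using bij_betwE[OF c] assms unfolding N_def by (meson UNIV_I lessThan_iff order_less_le_trans)
  have c_eq_iff: "c j = c k \<longleftrightarrow> j = k" for j k
    using c by (auto simp: bij_betw_def inj_on_def)
  define F :: "'m \<Rightarrow> complex^'n" where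
    "F i = (\<chi> k. of_real (1 / sqrt N) * exp (2 * pi * \<i> * of_nat (e i * c k) / of_nat N))" for i
  define z where "z j k = exp (2 * pi * \<i> * of_int (int (c k) - int (c j)) / of_nat N)" for j k
  have entry_prod: "cnj (F i $ j) * F i $ k = of_real (1 / N) * z j k ^ e i" for i j k
  proof -
    have "cnj (F i $ j) * F i $ k = of_real (1 / sqrt N) ^ 2 *
        (exp (- (2 * pi * \<i> * of_nat (e i * c j) / of_nat N)) * exp (2 * pi * \<i> * of_nat (e i * c k) / of_nat N))"
      by (simp add: F_def exp_cnj power2_eq_square)
    also have "\<dots> = of_real (1 / N) * exp (of_nat (e i) * (2 * pi * \<i> * of_int (int (c k) - int (c j)) / of_nat N))"
      unfolding exp_add[symmetric]
      by (simp add: power_divide algebra_simps diff_divide_distrib flip: of_real_power)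
    finally show ?thesis
      by (simp only: z_def exp_of_nat_mult)
  qed
  have "(\<Sum>i\<in>UNIV. cnj (F i $ j) * F i $ k) = (if j = k then 1 else 0)" for j k
  proof -
    have "(\<Sum>i\<in>UNIV. cnj (F i $ j) * F i $ k) = of_real (1 / N) * (\<Sum>i\<in>UNIV. z j k ^ e i)"
      by (simp only: entry_prod sum_distrib_left)
    also have "(\<Sum>i\<in>UNIV. z j k ^ e i) = (\<Sum>m<N. z j k ^ m)"
      by (rule sum.reindex_bij_betw[OF e])
    also have "of_real (1 / N) * (\<Sum>m<N. z j k ^ m) = (if j = k then 1 else 0)"
      using sum_powers_root_of_unity[OF N, of "int (c k) - int (c j)"] c_lt[of j] c_lt[of k] N
      by (auto simp: z_def c_eq_iff)
    finally show ?thesis .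
  qed
  hence "dual_pair F F"
    by (rule parseval_frame_dual_pair)
  moreover have "(hnorm (F i))^2 = real CARD('n) / real CARD('m)" for i
  proof -
    have "of_real ((hnorm (F i))^2) = cinner (F i) (F i)"
      by (simp only: cinner_self_eq_hnorm_sq)
    also have "\<dots> = (\<Sum>k\<in>UNIV. cnj (F i $ k) * F i $ k)"
      by (simp add: cinner_def mult.commute)
    also have "\<dots> = of_real (real CARD('n) / N)"
      by (simp add: entry_prod z_def)
    finally show ?thesis
      unfolding N_def of_real_eq_iff .
  qed
  ultimately show ?thesis by blast
qed

lemma le_M1: "M (E_mat {i} F G) \<le> M1 M (F :: 'm::finite \<Rightarrow> complex^'n) G"
  unfolding M1_def by (rule Max_ge) auto

lemma M1_le_iff: "M1 M (F :: 'm::finite \<Rightarrow> complex^'n) G \<le> a \<longleftrightarrow> (\<forall>i. M (E_mat {i} F G) \<le> a)"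
  unfolding M1_def by (subst Max_le_iff) auto

lemma M1_mono:
  assumes "\<And>f g. M (rank_one g f) \<le> M' (rank_one g f)"
  shows "M1 M (F :: 'm::finite \<Rightarrow> complex^'n) G \<le> M1 M' F G"
  using assms le_M1[of M'] order_trans unfolding M1_le_iff E_mat_singleton by blast

lemma M1_ge_ratio:
  fixes F G :: "'m::finite \<Rightarrow> complex^'n"
  assumes "is_dual F G" and M: "\<And>f g. cmod (cinner g f) \<le> M (rank_one g f)"
  shows "real CARD('n) / real CARD('m) \<le> M1 M F G"
proof -
  have "(\<Sum>i\<in>UNIV. cinner (G i) (F i)) = of_real (real CARD('m) * (real CARD('n) / real CARD('m)))"
    using trace_dual_pair[OF assms(1)] by simp
  then obtain i where "real CARD('n) / real CARD('m) \<le> cmod (cinner (G i) (F i))"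
    using ex_cmod_ge_of_sum_eq by blast
  thus ?thesis
    using M[where f = "F i" and g = "G i"] le_M1[of M i F G] by (simp add: E_mat_singleton)
qed

lemma optimal_iff_M1_eq_ratio:
  fixes F G :: "'m::finite \<Rightarrow> complex^'n"
  assumes "CARD('n) \<le> CARD('m)" "dual_pair F G"
    and lower: "\<And>f g. cmod (cinner g f) \<le> M (rank_one g f)"
    and self: "\<And>f. M (rank_one f f) = (hnorm f)^2"
  shows "optimal M F G \<longleftrightarrow> M1 M F G = real CARD('n) / real CARD('m)"
proof -
  let ?v = "real CARD('n) / real CARD('m)"
  obtain F0 :: "'m \<Rightarrow> complex^'n" where F0: "dual_pair F0 F0" "\<And>i. (hnorm (F0 i))^2 = ?v"
    using ex_equal_norm_parseval_frame[OF assms(1)] by blast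
  have "M1 M F0 F0 = ?v"
    using le_M1[of M undefined F0 F0] F0(2)
    by (intro antisym) (simp_all add: M1_le_iff E_mat_singleton self)
  have "Inf {M1 M F' G' | (F' :: 'm \<Rightarrow> complex^'n) G'. dual_pair F' G'} = ?v"
  proof (intro cInf_eq_minimum)
    show "?v \<in> {M1 M F' G' | (F' :: 'm \<Rightarrow> complex^'n) G'. dual_pair F' G'}"
      using F0(1) \<open>M1 M F0 F0 = ?v\<close> by force
  qed (use M1_ge_ratio[OF _ lower] in \<open>auto simp: dual_pair_def\<close>)
  thus ?thesis
    using assms(2) by (simp add: optimal_def)
qed

lemma num_radius_rank_one_self: "num_radius (rank_one f f) = (hnorm f)^2"
  using num_radius_rank_one_le[of f f] cmod_cinner_le_num_radius_rank_one[of f f]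
  by (simp add: cmod_cinner_self power2_eq_square)

lemma M1_frob_norm_le_of_M1_num_radius_le:
  fixes F G :: "'m::finite \<Rightarrow> complex^'n"
  assumes "is_dual F G" "M1 num_radius F G \<le> real CARD('n) / real CARD('m)"
  shows "M1 frob_norm F G \<le> real CARD('n) / real CARD('m)"
  unfolding M1_le_iff E_mat_singleton frob_norm_rank_one
proof
  fix i
  let ?v = "real CARD('n) / real CARD('m)"
  have num: "num_radius (rank_one (G j) (F j)) \<le> ?v" for j
    using assms(2) by (simp add: M1_le_iff E_mat_singleton)
  have "(\<Sum>j\<in>UNIV. cinner (G j) (F j)) = of_real (real CARD('m) * ?v)"
    using trace_dual_pair[OF assms(1)] by simp
  moreover have "cmod (cinner (G j) (F j)) \<le> ?v" for j
    using cmod_cinner_le_num_radius_rank_one num[of j] by (rule order_trans)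
  ultimately have "cinner (G i) (F i) = of_real ?v"
    by (rule eq_of_cmod_le_of_sum_eq[rotated])
  hence "(hnorm (G i) * hnorm (F i) + ?v) / 2 \<le> num_radius (rank_one (G i) (F i))"
    by (rule num_radius_rank_one_ge_mean) simp
  hence "(hnorm (G i) * hnorm (F i) + ?v) / 2 \<le> ?v"
    using num[of i] by linarith
  thus "hnorm (G i) * hnorm (F i) \<le> ?v" by argo
qed

theorem theorem6p1:
  fixes F G :: "'m::finite \<Rightarrow> complex^'n"
  assumes "CARD('n) \<le> CARD('m)"
    and "dual_pair F G"
  shows "(optimal frob_norm F G \<longrightarrow> optimal spec_radius F G)
       \<and> (optimal frob_norm F G \<longleftrightarrow> optimal num_radius F G)
       \<and> (optimal num_radius F G \<longrightarrow> optimal spec_radius F G)"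
proof -
  let ?v = "real CARD('n) / real CARD('m)"
  have spec_le_num: "cmod (cinner g f) \<le> num_radius (rank_one g f)" for f g :: "complex^'n"
    by (rule cmod_cinner_le_num_radius_rank_one)
  have num_le_frob: "num_radius (rank_one g f) \<le> frob_norm (rank_one g f)" for f g :: "complex^'n"
    by (simp add: num_radius_rank_one_le frob_norm_rank_one)
  have spec_le_frob: "cmod (cinner g f) \<le> frob_norm (rank_one g f)" for f g :: "complex^'n"
    using spec_le_num num_le_frob order_trans by blast
  note optimal_iff = optimal_iff_M1_eq_ratio[OF assms]
  have "optimal spec_radius F G \<longleftrightarrow> M1 spec_radius F G = ?v"
    by (rule optimal_iff) (simp_all add: spec_radius_rank_one cmod_cinner_self)
  moreover have "optimal num_radius F G \<longleftrightarrow> M1 num_radius F G = ?v"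
    using spec_le_num by (intro optimal_iff) (simp_all add: num_radius_rank_one_self)
  moreover have "optimal frob_norm F G \<longleftrightarrow> M1 frob_norm F G = ?v"
    using spec_le_frob by (intro optimal_iff) (simp_all add: frob_norm_rank_one power2_eq_square)
  moreover have "?v \<le> M1 spec_radius F G"
    using assms(2) by (intro M1_ge_ratio) (simp_all add: dual_pair_def spec_radius_rank_one)
  moreover have "M1 spec_radius F G \<le> M1 num_radius F G" "M1 num_radius F G \<le> M1 frob_norm F G"
    using spec_le_num num_le_frob by (simp_all add: M1_mono spec_radius_rank_one)
  moreover have "M1 num_radius F G \<le> ?v \<Longrightarrow> M1 frob_norm F G \<le> ?v"
    using assms(2) by (intro M1_frob_norm_le_of_M1_num_radius_le) (simp_all add: dual_pair_def)
  ultimately show ?thesis by linarith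
qed

end
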